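(* Let $S$ be a semigroup with finite $\mathcal{R}$-height, and let $B$ be a bi-ideal of $S$. Let $n$ be the maximum length of a chain of $\mathcal{R}$-classes of $S$ each of which intersects $B$. Then the $\mathcal{R}$-height of $B$ (regarded as a semigroup) satisfies $\mathrm{H}_{\mathcal{R}}(B)\leq 3n-1$.
   Context: For a semigroup $S$, $S^1$ denotes $S$ with an identity adjoined if necessary. Green's preorder on $S$: $a\leq_{\mathcal{R}} b$ iff $aS^1\subseteq bS^1$; $a\,\mathcal{R}\,b$ iff $a\leq_{\mathcal{R}} b$ and $b\leq_{\mathcal{R}} a$. The set of $\mathcal{R}$-classes is partially ordered by $R_a\leq R_b$ iff $a\leq_{\mathcal{R}} b$. The $\mathcal{R}$-height $\mathrm{H}_{\mathcal{R}}(S)$ is the supremum of the cardinalities (lengths) of chains in this poset. A bi-ideal of $S$ is a non-empty subset $B\subseteq S$ with $BS^1B\subseteq B$; in particular $B$ is a subsemigroup, and its $\mathcal{R}$-height is computed with respect to Green's relation $\mathcal{R}$ of the semigroup $B$ itself (i.e. $a\leq b$ in $B$ iff $aB^1\subseteq bB^1$). *)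

theory Defs
  imports Main "HOL-Library.Extended_Nat"
begin

text \<open>The semigroup S is the whole type 'a of class semigroup_mult.
  Green's R-preorder computed inside a subsemigroup X (X = UNIV gives S itself):
  a \<le>R b in X iff a X^1 \<subseteq> b X^1, i.e. a = b or a = b x for some x in X
  (a belongs to b X^1 suffices since a X^1 \<subseteq> b X^1 iff a \<in> b X^1).\<close>

definition R_le :: "'a::semigroup_mult set \<Rightarrow> 'a \<Rightarrow> 'a \<Rightarrow> bool" where
  "R_le X a b \<longleftrightarrow> (\<lambda>x. a * x) ` X \<union> {a} \<subseteq> (\<lambda>x. b * x) ` X \<union> {b}"

definition R_eq :: "'a::semigroup_mult set \<Rightarrow> 'a \<Rightarrow> 'a \<Rightarrow> bool" where
  "R_eq X a b \<longleftrightarrow> R_le X a b \<and> R_le X b a"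

text \<open>A set of representatives of a chain of R-classes (w.r.t. the R-relation of X):
  any two elements are R-comparable and distinct elements lie in distinct R-classes.
  Its cardinality is the length of the corresponding chain of R-classes.\<close>

definition R_chain :: "'a::semigroup_mult set \<Rightarrow> 'a set \<Rightarrow> bool" where
  "R_chain X C \<longleftrightarrow> (\<forall>a\<in>C. \<forall>b\<in>C. R_le X a b \<or> R_le X b a)
                   \<and> (\<forall>a\<in>C. \<forall>b\<in>C. R_eq X a b \<longrightarrow> a = b)"

text \<open>Supremum of lengths of chains of R-classes of X all of which meet Y
  (choose representatives in Y).\<close>

definition R_height_in :: "'a::semigroup_mult set \<Rightarrow> 'a set \<Rightarrow> enat" where
  "R_height_in X Y = Sup {enat (card C) | C. finite C \<and> C \<subseteq> Y \<and> R_chain X C}"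

definition R_height :: "'a::semigroup_mult set \<Rightarrow> enat" where
  "R_height X = R_height_in X X"

definition bi_ideal :: "'a::semigroup_mult set \<Rightarrow> bool" where
  "bi_ideal B \<longleftrightarrow> B \<noteq> {} \<and> (\<forall>a\<in>B. \<forall>b\<in>B. a * b \<in> B \<and> (\<forall>s. a * s * b \<in> B))"

end

theory Submission
  imports Defs
begin

text \<open>Write < for the strict R-orders. If c4 < c3 < c2 < c1 in B, then c4 < c1 in S:
  otherwise c2 = c1 x and c4 = c3 y with x, y in B and c1 in c4 S^1 give c2 in c3 (y S^1 x),
  and y S^1 x is contained in B because B is a bi-ideal, so c2 would be R-below c3 in B.
  Hence in a B-chain c1 > c2 > ... > c(3k) the elements c1, c4, ..., c(3k-2) strictly decrease
  in S, and the same trick yields one more element of B strictly below c(3k-2) in S, namely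
  c(3k) or c(3k) x where c(3k-1) = c(3k-2) x. So a chain of 3n R-classes of B produces a chain
  of n + 1 R-classes of S meeting B.\<close>

lemma R_le_refl: "R_le X a a"
  unfolding R_le_def by blast

lemma R_le_trans: "R_le X a b \<Longrightarrow> R_le X b c \<Longrightarrow> R_le X a c"
  unfolding R_le_def by blast

lemma R_leD: "R_le X a b \<Longrightarrow> a = b \<or> (\<exists>x\<in>X. a = b * x)"
  unfolding R_le_def by blast

lemma R_le_iff:
  assumes closed: "\<And>x y. x \<in> X \<Longrightarrow> y \<in> X \<Longrightarrow> x * y \<in> X"
  shows "R_le X a b \<longleftrightarrow> a = b \<or> (\<exists>x\<in>X. a = b * x)"
proof
  assume "a = b \<or> (\<exists>x\<in>X. a = b * x)"
  then show "R_le X a b"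
  proof
    assume "\<exists>x\<in>X. a = b * x"
    then obtain x where "x \<in> X" "a = b * x" by blast
    then have "a * y = b * (x * y)" and "x * y \<in> X" if "y \<in> X" for y
      using closed that by (simp_all add: mult.assoc)
    with \<open>x \<in> X\<close> \<open>a = b * x\<close> show "R_le X a b"
      unfolding R_le_def by blast
  qed (simp add: R_le_refl)
qed (rule R_leD)

lemma R_le_UNIV_iff: "R_le UNIV a b \<longleftrightarrow> a = b \<or> (\<exists>x. a = b * x)"
  by (simp add: R_le_iff)

lemma R_le_UNIV_if_R_le: "R_le X a b \<Longrightarrow> R_le UNIV a b"
  using R_leD R_le_UNIV_iff by blast

definition R_less :: "'a::semigroup_mult set \<Rightarrow> 'a \<Rightarrow> 'a \<Rightarrow> bool" where
  "R_less X a b \<longleftrightarrow> R_le X a b \<and> \<not> R_le X b a"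

lemma R_less_trans: "R_less X a b \<Longrightarrow> R_less X b c \<Longrightarrow> R_less X a c"
  unfolding R_less_def using R_le_trans by blast

lemma R_less_irrefl: "\<not> R_less X a a"
  unfolding R_less_def by blast

lemma bi_ideal_mult_closed: "bi_ideal B \<Longrightarrow> x \<in> B \<Longrightarrow> y \<in> B \<Longrightarrow> x * y \<in> B"
  unfolding bi_ideal_def by blast

lemma bi_ideal_sandwich: "bi_ideal B \<Longrightarrow> x \<in> B \<Longrightarrow> y \<in> B \<Longrightarrow> x * s * y \<in> B"
  unfolding bi_ideal_def by blast

lemma R_le_bi_ideal_iff: "bi_ideal B \<Longrightarrow> R_le B a b \<longleftrightarrow> a = b \<or> (\<exists>x\<in>B. a = b * x)"
  by (rule R_le_iff) (rule bi_ideal_mult_closed)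

lemma R_less_bi_ideal_obtain:
  assumes "R_less B a b"
  obtains x where "x \<in> B" "a = b * x"
  using assms R_leD unfolding R_less_def by metis

lemma R_le_bi_ideal_if_R_le_UNIV:
  assumes B: "bi_ideal B" and "x \<in> B" "y \<in> B" and "R_le UNIV a (c * x)"
  shows "R_le B (a * y) c"
proof -
  from \<open>R_le UNIV a (c * x)\<close> obtain z where "z \<in> B" "a * y = c * z"
  proof (unfold R_le_UNIV_iff, elim disjE exE)
    assume "a = c * x"
    then show ?thesis
      using that[of "x * y"] bi_ideal_mult_closed[OF B] assms by (simp add: mult.assoc)
  next
    fix s assume "a = c * x * s"
    then show ?thesis
      using that[of "x * s * y"] bi_ideal_sandwich[OF B] assms by (simp add: mult.assoc)
  qed
  then show ?thesis
    using R_le_bi_ideal_iff[OF B] by blast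
qed

lemma R_less_UNIV_three_steps:
  assumes B: "bi_ideal B"
    and "R_less B c\<^sub>2 c\<^sub>1" "R_less B c\<^sub>3 c\<^sub>2" "R_less B c\<^sub>4 c\<^sub>3"
  shows "R_less UNIV c\<^sub>4 c\<^sub>1"
proof -
  have "R_le UNIV c\<^sub>4 c\<^sub>1"
    using assms R_le_UNIV_if_R_le R_le_trans unfolding R_less_def by metis
  moreover have "\<not> R_le UNIV c\<^sub>1 c\<^sub>4"
  proof
    assume "R_le UNIV c\<^sub>1 c\<^sub>4"
    obtain x where "x \<in> B" "c\<^sub>2 = c\<^sub>1 * x"
      using assms(2) by (rule R_less_bi_ideal_obtain)
    obtain y where "y \<in> B" "c\<^sub>4 = c\<^sub>3 * y"
      using assms(4) by (rule R_less_bi_ideal_obtain)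
    have "R_le B c\<^sub>2 c\<^sub>3"
      using R_le_bi_ideal_if_R_le_UNIV[OF B \<open>y \<in> B\<close> \<open>x \<in> B\<close>] \<open>R_le UNIV c\<^sub>1 c\<^sub>4\<close>
        \<open>c\<^sub>2 = c\<^sub>1 * x\<close> \<open>c\<^sub>4 = c\<^sub>3 * y\<close> by simp
    then show False
      using assms(3) unfolding R_less_def by blast
  qed
  ultimately show ?thesis
    unfolding R_less_def ..
qed

lemma R_less_UNIV_below_two_steps:
  assumes B: "bi_ideal B" and "c\<^sub>3 \<in> B"
    and "R_less B c\<^sub>2 c\<^sub>1" "R_less B c\<^sub>3 c\<^sub>2"
  obtains u where "u \<in> B" "R_less UNIV u c\<^sub>1"
proof -
  have "R_le UNIV c\<^sub>3 c\<^sub>1"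
    using assms R_le_UNIV_if_R_le R_le_trans unfolding R_less_def by metis
  show ?thesis
  proof (cases "R_le UNIV c\<^sub>1 c\<^sub>3")
    case False
    with \<open>R_le UNIV c\<^sub>3 c\<^sub>1\<close> show ?thesis
      using that \<open>c\<^sub>3 \<in> B\<close> unfolding R_less_def by blast
  next
    case True
    obtain x where "x \<in> B" "c\<^sub>2 = c\<^sub>1 * x"
      using assms(3) by (rule R_less_bi_ideal_obtain)
    have "\<not> R_le UNIV c\<^sub>1 (c\<^sub>3 * x)"
    proof
      assume "R_le UNIV c\<^sub>1 (c\<^sub>3 * x)"
      then have "R_le B c\<^sub>2 c\<^sub>3"
        using R_le_bi_ideal_if_R_le_UNIV[OF B \<open>x \<in> B\<close> \<open>x \<in> B\<close>] \<open>c\<^sub>2 = c\<^sub>1 * x\<close> by simp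
      then show False
        using assms(4) unfolding R_less_def by blast
    qed
    moreover have "R_le UNIV (c\<^sub>3 * x) c\<^sub>1"
      using \<open>R_le UNIV c\<^sub>3 c\<^sub>1\<close> R_le_UNIV_iff R_le_trans by metis
    ultimately show ?thesis
      using that[of "c\<^sub>3 * x"] bi_ideal_mult_closed[OF B \<open>c\<^sub>3 \<in> B\<close> \<open>x \<in> B\<close>]
      unfolding R_less_def by blast
  qed
qed

lemma R_chain_insert:
  "R_chain X C \<Longrightarrow> \<forall>c\<in>C. R_less X c t \<Longrightarrow> R_chain X (insert t C)"
  unfolding R_chain_def R_eq_def R_less_def using R_le_refl[of X t] by blast

lemma R_chain_subset: "R_chain X C \<Longrightarrow> D \<subseteq> C \<Longrightarrow> R_chain X D"
  unfolding R_chain_def by blast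

lemma R_chain_set_if_descending:
  "sorted_wrt (\<lambda>a b. R_less X b a) xs \<Longrightarrow> R_chain X (set xs)"
  by (induction xs) (simp_all add: R_chain_insert R_chain_def[of _ "{}"])

lemma distinct_if_descending:
  "sorted_wrt (\<lambda>a b. R_less X b a) xs \<Longrightarrow> distinct xs"
  by (induction xs) (auto simp: R_less_irrefl)

lemma R_chain_has_top:
  assumes "finite C" "C \<noteq> {}" "R_chain X C"
  shows "\<exists>t\<in>C. \<forall>c\<in>C. R_le X c t"
  using assms
proof (induction C rule: finite_ne_induct)
  case (singleton x)
  then show ?case using R_le_refl by blast
next
  case (insert x C)
  obtain t where t: "t \<in> C" "\<forall>c\<in>C. R_le X c t"
    using insert.IH R_chain_subset[OF insert.prems] by blast
  have "R_le X x t \<or> R_le X t x"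
    using insert.prems t(1) unfolding R_chain_def by blast
  then show ?case
  proof
    assume "R_le X x t"
    with t show ?thesis by blast
  next
    assume "R_le X t x"
    with t have "\<forall>c\<in>insert x C. R_le X c x"
      using R_le_refl R_le_trans by blast
    then show ?thesis by blast
  qed
qed

lemma R_chain_descending_list:
  "finite C \<Longrightarrow> R_chain X C \<Longrightarrow> \<exists>xs. set xs = C \<and> sorted_wrt (\<lambda>a b. R_less X b a) xs"
proof (induction C rule: finite_remove_induct)
  case empty
  then show ?case by simp
next
  case (remove C)
  obtain t where t: "t \<in> C" "\<forall>c\<in>C. R_le X c t"
    using R_chain_has_top[OF remove.hyps(1,2) remove.prems] by blast
  obtain xs where xs: "set xs = C - {t}" "sorted_wrt (\<lambda>a b. R_less X b a) xs"
    using remove.IH[OF t(1)] R_chain_subset[OF remove.prems] by blast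
  have "\<forall>c\<in>C - {t}. R_less X c t"
    using t remove.prems unfolding R_chain_def R_eq_def R_less_def by blast
  with t(1) xs have "set (t # xs) = C \<and> sorted_wrt (\<lambda>a b. R_less X b a) (t # xs)"
    by auto
  then show ?case ..
qed

lemma R_descending_bi_ideal_to_UNIV:
  assumes B: "bi_ideal B"
  shows "set xs \<subseteq> B \<Longrightarrow> sorted_wrt (\<lambda>a b. R_less B b a) xs \<Longrightarrow> xs \<noteq> [] \<Longrightarrow>
    3 * k \<le> length xs \<Longrightarrow>
    \<exists>ys. set ys \<subseteq> B \<and> sorted_wrt (\<lambda>a b. R_less UNIV b a) ys \<and> length ys = k + 1 \<and>
      hd ys = hd xs"
proof (induction k arbitrary: xs)
  case 0
  then show ?case by (intro exI[of _ "[hd xs]"]) auto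
next
  case (Suc k)
  then obtain c\<^sub>1 c\<^sub>2 c\<^sub>3 rest where xs: "xs = c\<^sub>1 # c\<^sub>2 # c\<^sub>3 # rest" and "3 * k \<le> length rest"
    using Suc.prems(4) by (auto simp: Suc_le_length_iff numeral_3_eq_3)
  have c: "R_less B c\<^sub>2 c\<^sub>1" "R_less B c\<^sub>3 c\<^sub>2"
    using Suc.prems(2) xs by simp_all
  show ?case
  proof (cases rest)
    case Nil
    obtain u where "u \<in> B" "R_less UNIV u c\<^sub>1"
      using R_less_UNIV_below_two_steps[OF B _ c] Suc.prems(1) xs by auto
    then show ?thesis
      using Suc.prems(1) \<open>3 * k \<le> length rest\<close> xs Nil
      by (intro exI[of _ "[c\<^sub>1, u]"]) auto
  next
    case (Cons c\<^sub>4 rest')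
    obtain ys where ys: "set ys \<subseteq> B" "sorted_wrt (\<lambda>a b. R_less UNIV b a) ys"
      "length ys = k + 1" "hd ys = c\<^sub>4"
      using Suc.IH[of rest] Suc.prems \<open>3 * k \<le> length rest\<close> xs Cons by auto
    then obtain zs where zs: "ys = c\<^sub>4 # zs"
      by (cases ys) auto
    have "R_less UNIV c\<^sub>4 c\<^sub>1"
      using R_less_UNIV_three_steps[OF B c] Suc.prems(2) xs Cons by simp
    then have "\<forall>y\<in>set ys. R_less UNIV y c\<^sub>1"
      using ys(2) zs R_less_trans by fastforce
    then show ?thesis
      using Suc.prems(1) xs ys by (intro exI[of _ "c\<^sub>1 # ys"]) auto
  qed
qed

lemma R_chain_bi_ideal_to_UNIV:
  assumes B: "bi_ideal B"
    and C: "finite C" "C \<subseteq> B" "R_chain B C" "C \<noteq> {}" "3 * k \<le> card C"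
  obtains D where "D \<subseteq> B" "finite D" "R_chain UNIV D" "card D = k + 1"
proof -
  obtain xs where xs: "set xs = C" "sorted_wrt (\<lambda>a b. R_less B b a) xs"
    using R_chain_descending_list C by blast
  then have "length xs = card C"
    using distinct_card distinct_if_descending by metis
  then obtain ys where ys: "set ys \<subseteq> B" "sorted_wrt (\<lambda>a b. R_less UNIV b a) ys"
    "length ys = k + 1"
    using R_descending_bi_ideal_to_UNIV[OF B, of xs k] xs C by auto
  then show ?thesis
    using that R_chain_set_if_descending distinct_card distinct_if_descending
    by (metis finite_set)
qed

theorem theorem3p1:
  fixes B :: "'a::semigroup_mult set" and n :: nat
  assumes "R_height (UNIV :: 'a set) \<noteq> \<infinity>"
    and "bi_ideal B"
    and "R_height_in (UNIV :: 'a set) B = enat n"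
  shows "R_height B \<le> enat (3 * n - 1)"
proof -
  have S_chains: "card D \<le> n" if "finite D" "D \<subseteq> B" "R_chain UNIV D" for D
  proof -
    have "enat (card D) \<le> R_height_in UNIV B"
      unfolding R_height_in_def using that by (intro Sup_upper) blast
    then show ?thesis using assms(3) by simp
  qed
  have "card C \<le> 3 * n - 1" if "finite C" "C \<subseteq> B" "R_chain B C" for C
  proof (rule ccontr)
    assume "\<not> card C \<le> 3 * n - 1"
    then have "C \<noteq> {}" "3 * n \<le> card C" by auto
    then show False
      using R_chain_bi_ideal_to_UNIV[OF assms(2) that] S_chains
      by (metis Suc_n_not_le_n Suc_eq_plus1)
  qed
  then show ?thesis
    unfolding R_height_def R_height_in_def by (auto intro!: Sup_least)
qed

end
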